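(* Let $1<a_1<a_2$ be coprime integers, $S=\langle a_1,a_2\rangle$, and let $t\in(1,\infty)$. If $r_0(t)$ is irrational, then $\Delta_t(S)$ is dense in $[0,|a_1a_2P(t)|]$, i.e. $[0,|a_1a_2P(t)|]$ is contained in the closure of $\Delta_t(S)$.
   Context: $S=\{\lambda_1a_1+\lambda_2a_2:\lambda_1,\lambda_2\in\mathbb{N}_0\}$. For $t\in[1,\infty)$ and $(u,v)\in\mathbb{R}^2$, $\|(u,v)\|_t=(|u|^t+|v|^t)^{1/t}$. For $x\in S$, $Z(x)=\{(m,n)\in\mathbb{N}_0^2: ma_1+na_2=x\}$, $\mathscr{L}_t(x)=\{\|f\|_t: f\in Z(x)\}$, $\Delta_t(x)$ is the set of differences between consecutive elements of $\mathscr{L}_t(x)$ (in increasing order), and $\Delta_t(S)=\bigcup_{x\in S}\Delta_t(x)$. Define $\mu_t(r)=\left\|\left(\frac{1-r}{a_1},\frac{r}{a_2}\right)\right\|_t$ for $r\in[0,1]$, $r_0(t)=\min\{r\in[0,1]:\mu_t(r)=\frac{1}{a_2}\}$, and $P(t)=\mu_t'(r_0(t))$ (derivative in $r$). *)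

theory Defs
  imports "HOL-Analysis.Analysis"
begin

definition numsg :: "nat \<Rightarrow> nat \<Rightarrow> nat set" where
  "numsg a1 a2 = {l1 * a1 + l2 * a2 | l1 l2. True}"

definition tnorm :: "real \<Rightarrow> real \<Rightarrow> real \<Rightarrow> real" where
  "tnorm t u v = (\<bar>u\<bar> powr t + \<bar>v\<bar> powr t) powr (1 / t)"

definition factZ :: "nat \<Rightarrow> nat \<Rightarrow> nat \<Rightarrow> (nat \<times> nat) set" where
  "factZ a1 a2 x = {(m, n). m * a1 + n * a2 = x}"

definition lenset :: "real \<Rightarrow> nat \<Rightarrow> nat \<Rightarrow> nat \<Rightarrow> real set" where
  "lenset t a1 a2 x = {tnorm t (real m) (real n) | m n. (m, n) \<in> factZ a1 a2 x}"

definition consec_diffs :: "real set \<Rightarrow> real set" where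
  "consec_diffs L = {q - p | p q. p \<in> L \<and> q \<in> L \<and> p < q \<and> \<not> (\<exists>r\<in>L. p < r \<and> r < q)}"

definition delta_t :: "real \<Rightarrow> nat \<Rightarrow> nat \<Rightarrow> nat \<Rightarrow> real set" where
  "delta_t t a1 a2 x = consec_diffs (lenset t a1 a2 x)"

definition delta_S :: "real \<Rightarrow> nat \<Rightarrow> nat \<Rightarrow> real set" where
  "delta_S t a1 a2 = (\<Union>x\<in>numsg a1 a2. delta_t t a1 a2 x)"

definition mu :: "real \<Rightarrow> nat \<Rightarrow> nat \<Rightarrow> real \<Rightarrow> real" where
  "mu t a1 a2 r = tnorm t ((1 - r) / real a1) (r / real a2)"

definition r0 :: "real \<Rightarrow> nat \<Rightarrow> nat \<Rightarrow> real" where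
  "r0 t a1 a2 = (LEAST r. r \<in> {0..1} \<and> mu t a1 a2 r = 1 / real a2)"

definition Pt :: "real \<Rightarrow> nat \<Rightarrow> nat \<Rightarrow> real" where
  "Pt t a1 a2 = deriv (mu t a1 a2) (r0 t a1 a2)"

end

theory Submission
  imports Defs
begin

(* The factorizations of N a2 are (k a2, N - k a1) with k a1 <= N, of t-length
   N a2 mu(1 - k a1 / N). Since mu^t is convex and mu(r0) = mu(1) = 1/a2, the lengths with
   1 - k a1 / N >= r0 are at most N (the length for k = 0), while mu decreases on [0, r0];
   hence the least k with 1 - k a1 / N < r0 gives the next length above N. The difference
   N a2 (mu(r0 - theta a1 / N) - mu(r0)) is close to -theta a1 a2 P(t) for large N, where
   theta = ceil(N beta) - N beta and beta = (1 - r0) / a1. As beta is irrational, Kronecker's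
   theorem lets theta approach any point of [0, 1] along arbitrarily large N. *)

lemma tnorm_scale:
  assumes "0 \<le> c" "0 < t"
  shows "tnorm t (c * u) (c * v) = c * tnorm t u v"
proof -
  have "\<bar>c * u\<bar> powr t + \<bar>c * v\<bar> powr t = c powr t * (\<bar>u\<bar> powr t + \<bar>v\<bar> powr t)"
    using assms by (simp add: abs_mult powr_mult distrib_left)
  moreover have "(c powr t) powr (1 / t) = c"
    using assms by (simp add: powr_powr)
  ultimately show ?thesis
    using assms by (simp add: tnorm_def powr_mult)
qed

lemma factZ_multiple_of_a2:
  assumes "coprime a1 a2" "0 < a2"
  shows "factZ a1 a2 (N * a2) = {(a2 * k, N - k * a1) | k. k * a1 \<le> N}"
proof (intro set_eqI iffI)
  fix f assume "f \<in> factZ a1 a2 (N * a2)"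
  then obtain m n where f: "f = (m, n)" and mn: "m * a1 + n * a2 = N * a2"
    by (auto simp: factZ_def)
  then have "n \<le> N"
    using assms(2) by (metis le_add2 mult_le_cancel2)
  with mn have m: "m * a1 = (N - n) * a2"
    by (simp add: diff_mult_distrib)
  then have "a2 dvd m"
    using assms(1) by (metis coprime_commute coprime_dvd_mult_left_iff dvd_triv_right)
  then obtain k where "m = a2 * k" by blast
  with m assms(2) have "k * a1 = N - n" by simp
  with f \<open>m = a2 * k\<close> \<open>n \<le> N\<close> show "f \<in> {(a2 * k, N - k * a1) | k. k * a1 \<le> N}"
    by auto
next
  fix f assume "f \<in> {(a2 * k, N - k * a1) | k. k * a1 \<le> N}"
  then obtain k where "f = (a2 * k, N - k * a1)" "k * a1 \<le> N" by blast
  then show "f \<in> factZ a1 a2 (N * a2)"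
    by (simp add: factZ_def algebra_simps diff_mult_distrib2)
qed

lemma consec_diffs_image:
  assumes "i \<in> K" "j \<in> K" "f i < f j" "\<And>k. k \<in> K \<Longrightarrow> f k \<le> f i \<or> f j \<le> f k"
  shows "f j - f i \<in> consec_diffs (f ` K)"
  unfolding consec_diffs_def mem_Collect_eq using assms
  by (intro exI[of _ "f i"] exI[of _ "f j"]) force

lemma convex_on_compose_affine:
  fixes f h :: "real \<Rightarrow> real"
  assumes "convex_on S f" "convex T" "h ` T \<subseteq> S"
    and affine: "\<And>x y u. h ((1 - u) * x + u * y) = (1 - u) * h x + u * h y"
  shows "convex_on T (\<lambda>x. f (h x))"
proof (rule convex_onI)
  fix u x y :: real assume "0 < u" "u < 1" "x \<in> T" "y \<in> T"
  then show "f (h ((1 - u) *\<^sub>R x + u *\<^sub>R y)) \<le> (1 - u) * f (h x) + u * f (h y)"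
    using convex_onD[OF assms(1), of u "h x" "h y"] assms(3) by (auto simp: affine)
qed (rule assms(2))

lemma convex_on_powr_nonneg:
  assumes "1 \<le> p"
  shows "convex_on {0..} (\<lambda>x::real. x powr p)"
proof (rule convex_on_linorderI)
  fix u x y :: real
  assume u: "0 < u" "u < 1" and xy: "x \<in> {0..}" "y \<in> {0..}" "x < y"
  show "((1 - u) *\<^sub>R x + u *\<^sub>R y) powr p \<le> (1 - u) * x powr p + u * y powr p"
  proof (cases "x = 0")
    case True
    have "u powr p \<le> u"
      using u assms by (metis powr_le_one_le less_eq_real_def)
    then have "u powr p * y powr p \<le> u * y powr p"
      by (simp add: mult_right_mono)
    then show ?thesis
      using True u xy by (simp add: powr_mult)
  next
    case False
    then show ?thesis
      using convex_onD[OF powr_convex[OF assms], of u x y] u xy by simp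
  qed
qed simp

definition ceiling_gap :: "real \<Rightarrow> real" where
  "ceiling_gap x = real_of_int \<lceil>x\<rceil> - x"

lemma ceiling_gap_not_Ints:
  assumes "x \<notin> \<int>"
  shows "ceiling_gap x = 1 - frac x"
  using assms by (simp add: ceiling_gap_def ceiling_altdef frac_def) (metis Ints_of_int)

lemma ceiling_gap_approx:
  fixes \<beta> :: real and M :: nat
  assumes "\<beta> \<notin> \<rat>" "0 \<le> \<alpha>" "\<alpha> \<le> 1" "0 < \<epsilon>"
  obtains N :: nat where "M \<le> N" "real N * \<beta> \<notin> \<int>" "\<bar>ceiling_gap (real N * \<beta>) - \<alpha>\<bar> < \<epsilon>"
proof -
  have irrational: "real n * \<beta> \<notin> \<rat>" if "0 < n" for n
    using assms(1) that by (metis Rats_divide Rats_of_nat nonzero_mult_div_cancel_left of_nat_0_less_iff order_less_irrefl)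
  define \<theta> where "\<theta> = real (Suc M) * \<beta>"
  obtain k where k: "0 < k" "\<bar>frac (real k * \<theta>) - (1 - \<alpha>)\<bar> < \<epsilon>"
    using Kronecker_approx_1_explicit[OF irrational[of "Suc M"], of "1 - \<alpha>" \<epsilon>] assms
    by (auto simp: \<theta>_def)
  define N where "N = k * Suc M"
  have N: "real N * \<beta> = real k * \<theta>"
    by (simp add: N_def \<theta>_def algebra_simps)
  have "M \<le> N"
    using mult_le_mono1[OF Suc_leI[OF k(1)], of "Suc M"] by (simp add: N_def)
  moreover have not_int: "real k * \<theta> \<notin> \<int>"
    using irrational[of N] k(1) N Ints_subset_Rats by (auto simp: N_def)
  moreover have "\<bar>ceiling_gap (real k * \<theta>) - \<alpha>\<bar> < \<epsilon>"
    using k(2) not_int by (simp add: ceiling_gap_not_Ints abs_minus_commute)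
  ultimately show ?thesis
    using that N by metis
qed

locale tnorm_lengths =
  fixes a1 a2 :: nat and t :: real
  assumes a1_pos: "0 < a1" and a1_less_a2: "a1 < a2" and t_ge_1: "1 \<le> t"
begin

abbreviation \<mu> :: "real \<Rightarrow> real" where "\<mu> \<equiv> mu t a1 a2"
abbreviation \<rho> :: real where "\<rho> \<equiv> r0 t a1 a2"

lemma t_pos: "0 < t"
  using t_ge_1 by simp

lemma a2_pos: "0 < a2"
  using a1_pos a1_less_a2 by simp

lemma mu_0: "\<mu> 0 = 1 / a1"
  using t_pos by (simp add: mu_def tnorm_def powr_powr)

lemma mu_1: "\<mu> 1 = 1 / a2"
  using t_pos by (simp add: mu_def tnorm_def powr_powr)

lemma continuous_on_mu: "continuous_on A \<mu>"
  unfolding mu_def tnorm_def using t_pos a1_pos a2_pos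
  by (intro continuous_on_powr' continuous_intros) auto

lemma r0_mem: "\<rho> \<in> {0..1}"
  and mu_r0: "\<mu> \<rho> = 1 / a2"
  and r0_le: "\<lbrakk>r \<in> {0..1}; \<mu> r = 1 / a2\<rbrakk> \<Longrightarrow> \<rho> \<le> r"
proof -
  define Z where "Z = {r \<in> {0..1}. \<mu> r = 1 / a2}"
  have "closed Z"
    unfolding Z_def by (rule continuous_closed_preimage_constant) (auto intro: continuous_on_mu)
  moreover have "1 \<in> Z" "bdd_below Z"
    using mu_1 by (auto simp: Z_def intro: bdd_belowI[of _ 0])
  ultimately have "Inf Z \<in> Z" "\<And>r. r \<in> Z \<Longrightarrow> Inf Z \<le> r"
    using closed_contains_Inf cInf_lower by blast+
  moreover from this have "\<rho> = Inf Z"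
    unfolding r0_def by (intro Least_equality) (auto simp: Z_def)
  ultimately show "\<rho> \<in> {0..1}" "\<mu> \<rho> = 1 / a2" "\<lbrakk>r \<in> {0..1}; \<mu> r = 1 / a2\<rbrakk> \<Longrightarrow> \<rho> \<le> r"
    by (auto simp: Z_def)
qed

lemma r0_strict_bounds:
  assumes "\<rho> \<notin> \<rat>"
  shows "0 < \<rho>" "\<rho> < 1"
proof -
  have "\<rho> \<noteq> 0" "\<rho> \<noteq> 1"
    using assms by auto
  then show "0 < \<rho>" "\<rho> < 1"
    using r0_mem by auto
qed

lemma mu_gt_before_r0:
  assumes "0 \<le> r" "r < \<rho>"
  shows "1 / a2 < \<mu> r"
proof (rule ccontr)
  assume "\<not> ?thesis"
  moreover have "1 / a2 \<le> \<mu> 0"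
    using mu_0 a1_pos a1_less_a2 by (simp add: frac_le)
  ultimately obtain x where "0 \<le> x" "x \<le> r" "\<mu> x = 1 / a2"
    using IVT2'[of \<mu> r "1 / a2" 0] assms(1) continuous_on_mu by force
  then show False
    using r0_le[of x] r0_mem assms(2) by auto
qed

lemma mu_le_max:
  assumes "0 \<le> r" "r \<le> r'" "r' \<le> s" "s \<le> 1"
  shows "\<mu> r' \<le> max (\<mu> r) (\<mu> s)"
proof -
  define g where "g x = ((1 - x) / a1) powr t + (x / a2) powr t" for x
  have mu_g: "\<mu> x = g x powr (1 / t)" if "x \<in> {0..1}" for x
    using that by (simp add: mu_def tnorm_def g_def)
  have "convex_on {0..1} (\<lambda>x. ((1 - x) / a1) powr t)"
    by (rule convex_on_compose_affine[OF convex_on_powr_nonneg[OF t_ge_1]])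
      (auto simp: diff_divide_distrib add_divide_distrib algebra_simps intro!: divide_right_mono)
  moreover have "convex_on {0..1} (\<lambda>x. (x / a2) powr t)"
    by (rule convex_on_compose_affine[OF convex_on_powr_nonneg[OF t_ge_1]])
      (auto simp: add_divide_distrib)
  ultimately have "convex_on {r..s} g"
    unfolding g_def by (rule convex_on_subset[OF convex_on_add]) (use assms in auto)
  then have "g r' \<le> max (g r) (g s)"
    using convex_on_le_max assms by simp
  moreover have "0 \<le> g x" for x
    by (simp add: g_def)
  ultimately have "g r' powr (1 / t) \<le> max (g r powr (1 / t)) (g s powr (1 / t))"
    using t_pos by (cases "g r \<le> g s") (simp_all add: powr_mono2)
  then show ?thesis
    using assms by (simp add: mu_g)
qed

lemma mu_le_after_r0:
  assumes "\<rho> \<le> r" "r \<le> 1"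
  shows "\<mu> r \<le> 1 / a2"
  using mu_le_max[of \<rho> r 1] assms r0_mem by (simp add: mu_r0 mu_1)

lemma mu_antimono_before_r0:
  assumes "0 \<le> r" "r \<le> r'" "r' < \<rho>"
  shows "\<mu> r' \<le> \<mu> r"
  using mu_le_max[of r r' \<rho>] mu_gt_before_r0[of r'] assms r0_mem by (auto simp: mu_r0)

definition factor_length :: "nat \<Rightarrow> nat \<Rightarrow> real" where
  "factor_length N k = real N * a2 * \<mu> (1 - real k * a1 / N)"

lemma lenset_multiple_of_a2:
  assumes "coprime a1 a2" "0 < N"
  shows "lenset t a1 a2 (N * a2) = factor_length N ` {k. k * a1 \<le> N}"
proof -
  have length: "tnorm t (real (a2 * k)) (real (N - k * a1)) = factor_length N k"
    if "k * a1 \<le> N" for k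
  proof -
    have "factor_length N k = N * a2 * tnorm t (k / N) (real (N - k * a1) / (N * a2))"
      using that assms(2) a1_pos a2_pos by (simp add: factor_length_def mu_def field_simps)
    also have "\<dots> = tnorm t (N * a2 * (k / N)) (N * a2 * (real (N - k * a1) / (N * a2)))"
      by (rule tnorm_scale[symmetric]) (simp_all add: t_pos)
    also have "\<dots> = tnorm t (real (a2 * k)) (real (N - k * a1))"
      using assms(2) a2_pos by simp
    finally show ?thesis ..
  qed
  have "lenset t a1 a2 (N * a2) = (\<lambda>k. tnorm t (real (a2 * k)) (real (N - k * a1))) ` {k. k * a1 \<le> N}"
    unfolding lenset_def factZ_multiple_of_a2[OF assms(1) a2_pos] by blast
  also have "\<dots> = factor_length N ` {k. k * a1 \<le> N}"
    using length by (intro image_cong) auto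
  finally show ?thesis .
qed

lemma factor_length_0: "factor_length N 0 = N"
  using a2_pos by (simp add: factor_length_def mu_1)

lemma factor_length_le:
  assumes "0 < N" "real k * a1 \<le> N * (1 - \<rho>)"
  shows "factor_length N k \<le> N"
proof -
  have "\<rho> \<le> 1 - real k * a1 / N"
    using assms by (simp add: field_simps)
  then have "\<mu> (1 - real k * a1 / N) \<le> 1 / a2"
    by (rule mu_le_after_r0) simp
  then have "real N * (a2 * \<mu> (1 - real k * a1 / N)) \<le> real N * 1"
    using a2_pos by (intro mult_left_mono) (simp_all add: field_simps)
  then show ?thesis
    by (simp add: factor_length_def mult.assoc)
qed

lemma factor_length_gt:
  assumes "N * (1 - \<rho>) < real k * a1" "k * a1 \<le> N"
  shows "N < factor_length N k"
proof -
  have "0 < N"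
    using assms r0_mem by (cases "N = 0") (auto simp: mult_nonneg_nonneg)
  have "real k * a1 \<le> N"
    by (metis assms(2) of_nat_le_iff of_nat_mult)
  then have "1 / a2 < \<mu> (1 - real k * a1 / N)"
    using assms(1) \<open>0 < N\<close> by (intro mu_gt_before_r0) (simp_all add: field_simps)
  then show ?thesis
    using \<open>0 < N\<close> a2_pos by (simp add: factor_length_def field_simps)
qed

lemma factor_length_mono:
  assumes "N * (1 - \<rho>) < real j * a1" "j \<le> k" "k * a1 \<le> N"
  shows "factor_length N j \<le> factor_length N k"
proof -
  have "0 < N"
    using assms r0_mem by (cases "N = 0") (auto simp: mult_nonneg_nonneg)
  have "real j \<le> real k" "real k * a1 \<le> N"
    using assms(2) by (simp, metis assms(3) of_nat_le_iff of_nat_mult)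
  then have "\<mu> (1 - real j * a1 / N) \<le> \<mu> (1 - real k * a1 / N)"
    using assms(1) \<open>0 < N\<close> a1_pos
    by (intro mu_antimono_before_r0) (simp_all add: field_simps mult_right_mono)
  then show ?thesis
    by (simp add: factor_length_def mult_left_mono)
qed

lemma mu_has_real_derivative:
  assumes "0 < r" "r < 1"
  shows "(\<mu> has_real_derivative deriv \<mu> r) (at r)"
proof -
  define g where "g x = (((1 - x) / a1) powr t + (x / a2) powr t) powr (1 / t)" for x
  have "\<exists>D. (g has_real_derivative D) (at r)"
    unfolding g_def using assms a1_pos a2_pos
    by (intro exI derivative_eq_intros refl) (simp_all add: add_pos_pos)
  then obtain D where D: "(g has_real_derivative D) (at r)" ..
  have "g x = \<mu> x" if "x \<in> {0<..<1}" for x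
    using that by (simp add: g_def mu_def tnorm_def)
  then have "(\<mu> has_real_derivative D) (at r)"
    using assms by (intro has_field_derivative_transform_within_open[OF D, of "{0<..<1}"]) auto
  then show ?thesis
    by (metis DERIV_imp_deriv)
qed

lemma Pt_nonpos:
  assumes "0 < \<rho>" "\<rho> < 1"
  shows "Pt t a1 a2 \<le> 0"
proof (rule ccontr)
  assume "\<not> ?thesis"
  then obtain e where "0 < e" and e: "\<And>h. 0 < h \<Longrightarrow> h < e \<Longrightarrow> \<mu> (\<rho> - h) < \<mu> \<rho>"
    using DERIV_pos_inc_left[OF mu_has_real_derivative[OF assms]] unfolding Pt_def by force
  define h where "h = min (e / 2) \<rho>"
  have "0 < h" "h < e" "h \<le> \<rho>"
    using \<open>0 < e\<close> assms by (auto simp: h_def)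
  then have "\<mu> \<rho> < \<mu> (\<rho> - h)"
    using mu_gt_before_r0[of "\<rho> - h"] by (simp add: mu_r0)
  then show False
    using e[OF \<open>0 < h\<close> \<open>h < e\<close>] by simp
qed

definition jump :: "nat \<Rightarrow> real \<Rightarrow> real" where
  "jump N \<theta> = real N * a2 * (\<mu> (\<rho> - \<theta> * a1 / N) - \<mu> \<rho>)"

lemma least_index_past_r0:
  assumes "0 < N" "a1 \<le> N * \<rho>" "N * ((1 - \<rho>) / a1) \<notin> \<int>"
  obtains ks where "N * (1 - \<rho>) < real ks * a1" "ks * a1 \<le> N"
    "\<And>k. N * (1 - \<rho>) < real k * a1 \<Longrightarrow> ks \<le> k"
    "1 - real ks * a1 / N = \<rho> - ceiling_gap (N * ((1 - \<rho>) / a1)) * a1 / N"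
proof
  define k0 where "k0 = N * ((1 - \<rho>) / a1)"
  have "0 \<le> k0"
    using r0_mem by (simp add: k0_def)
  then have ks: "real (nat \<lceil>k0\<rceil>) = \<lceil>k0\<rceil>"
    by simp
  have "real_of_int \<lceil>k0\<rceil> \<noteq> k0"
    using assms(3) unfolding k0_def by (metis Ints_of_int)
  then have "k0 < \<lceil>k0\<rceil>" "\<lceil>k0\<rceil> < k0 + 1"
    using le_of_int_ceiling[of k0] ceiling_correct[of k0] by linarith+
  then show "N * (1 - \<rho>) < real (nat \<lceil>k0\<rceil>) * a1"
    unfolding ks using a1_pos by (simp add: k0_def field_simps)
  have "real (nat \<lceil>k0\<rceil>) * a1 < (k0 + 1) * a1"
    unfolding ks using \<open>\<lceil>k0\<rceil> < k0 + 1\<close> a1_pos by simp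
  also have "\<dots> \<le> N"
    using assms(2) a1_pos by (simp add: k0_def field_simps)
  finally show "nat \<lceil>k0\<rceil> * a1 \<le> N"
    by (metis of_nat_le_iff of_nat_mult less_le)
  show "nat \<lceil>k0\<rceil> \<le> k" if "N * (1 - \<rho>) < real k * a1" for k
    using that a1_pos by (simp add: k0_def ceiling_le nat_le_iff field_simps)
  show "1 - real (nat \<lceil>k0\<rceil>) * a1 / N = \<rho> - ceiling_gap k0 * a1 / N"
    using assms(1) a1_pos unfolding ceiling_gap_def ks by (simp add: k0_def field_simps)
qed

lemma jump_in_delta_S:
  assumes "coprime a1 a2" "a1 \<le> N * \<rho>" "N * ((1 - \<rho>) / a1) \<notin> \<int>"
  shows "jump N (ceiling_gap (N * ((1 - \<rho>) / a1))) \<in> delta_S t a1 a2"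
proof -
  have "0 < N"
    using assms(2) a1_pos by (cases "N = 0") auto
  then obtain ks where past: "N * (1 - \<rho>) < real ks * a1" and "ks * a1 \<le> N"
    and least: "\<And>k. N * (1 - \<rho>) < real k * a1 \<Longrightarrow> ks \<le> k"
    and rs: "1 - real ks * a1 / N = \<rho> - ceiling_gap (N * ((1 - \<rho>) / a1)) * a1 / N"
    using least_index_past_r0 assms(2,3) by blast
  have "factor_length N k \<le> factor_length N 0 \<or> factor_length N ks \<le> factor_length N k"
    if "k * a1 \<le> N" for k
    using factor_length_le[OF \<open>0 < N\<close>, of k] factor_length_mono[OF past least that]
    by (cases "real k * a1 \<le> N * (1 - \<rho>)") (simp_all add: factor_length_0)
  then have "factor_length N ks - factor_length N 0 \<in> delta_t t a1 a2 (N * a2)"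
    unfolding delta_t_def lenset_multiple_of_a2[OF assms(1) \<open>0 < N\<close>] using \<open>ks * a1 \<le> N\<close>
    by (intro consec_diffs_image) (simp_all add: factor_length_0 factor_length_gt[OF past])
  moreover have "N * a2 \<in> numsg a1 a2"
    unfolding numsg_def mem_Collect_eq by (intro exI[of _ 0] exI[of _ N]) simp
  ultimately have "factor_length N ks - factor_length N 0 \<in> delta_S t a1 a2"
    unfolding delta_S_def by blast
  moreover have "factor_length N ks - factor_length N 0 = jump N (ceiling_gap (N * ((1 - \<rho>) / a1)))"
    unfolding factor_length_def rs jump_def mu_r0 using a2_pos by (simp add: mu_1 field_simps)
  ultimately show ?thesis
    by simp
qed

lemma eventually_jump_close_to_linear:
  assumes "0 < \<rho>" "\<rho> < 1" "0 < \<eta>"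
  shows "\<forall>\<^sub>F N in sequentially. \<forall>\<theta>\<in>{0..1::real}.
           \<bar>jump N \<theta> + \<theta> * a1 * a2 * Pt t a1 a2\<bar> \<le> \<eta>"
proof -
  define P where "P = Pt t a1 a2"
  define e where "e = \<eta> / (a1 * a2)"
  have "0 < e"
    using assms(3) a1_pos a2_pos by (simp add: e_def)
  have "(\<mu> has_derivative (\<lambda>h. P * h)) (at \<rho>)"
    using mu_has_real_derivative[OF assms(1,2)] by (simp add: P_def Pt_def has_field_derivative_def)
  then obtain \<delta> where "0 < \<delta>"
    and \<delta>: "\<And>y. \<bar>y - \<rho>\<bar> < \<delta> \<Longrightarrow> \<bar>\<mu> y - \<mu> \<rho> - P * (y - \<rho>)\<bar> \<le> e * \<bar>y - \<rho>\<bar>"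
    using \<open>0 < e\<close> unfolding has_derivative_at_alt by force
  have "\<forall>\<^sub>F N in sequentially. a1 / \<delta> < real N"
    using filterlim_real_sequentially unfolding filterlim_at_top_dense by blast
  then show ?thesis
  proof (rule eventually_mono, intro ballI)
    fix N :: nat and \<theta> :: real assume "a1 / \<delta> < N" "\<theta> \<in> {0..1}"
    moreover have "0 < a1 / \<delta>"
      using \<open>0 < \<delta>\<close> a1_pos by simp
    ultimately have "0 < N"
      by (metis less_trans of_nat_0_less_iff)
    with \<open>a1 / \<delta> < N\<close> have "a1 / N < \<delta>"
      using \<open>0 < \<delta>\<close> by (simp add: field_simps)
    define h where "h = \<theta> * (a1 / N)"
    have "0 \<le> h" "h < \<delta>"
      using \<open>\<theta> \<in> {0..1}\<close> \<open>a1 / N < \<delta>\<close> mult_left_le_one_le[of "a1 / N" \<theta>] by (auto simp: h_def)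
    then have "\<bar>\<mu> (\<rho> - h) - \<mu> \<rho> + P * h\<bar> \<le> e * h"
      using \<delta>[of "\<rho> - h"] by simp
    then have "N * a2 * \<bar>\<mu> (\<rho> - h) - \<mu> \<rho> + P * h\<bar> \<le> N * a2 * (e * h)"
      by (simp add: mult_left_mono)
    also have "\<dots> = \<theta> * \<eta>"
      using \<open>0 < N\<close> a1_pos a2_pos by (simp add: e_def h_def)
    also have "\<dots> \<le> \<eta>"
      using \<open>\<theta> \<in> {0..1}\<close> assms(3) by (simp add: mult_left_le_one_le)
    finally have "\<bar>N * a2 * (\<mu> (\<rho> - h) - \<mu> \<rho> + P * h)\<bar> \<le> \<eta>"
      by (simp add: abs_mult)
    moreover have "N * a2 * (\<mu> (\<rho> - h) - \<mu> \<rho> + P * h) = jump N \<theta> + \<theta> * a1 * a2 * P"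
      using \<open>0 < N\<close> by (simp add: jump_def h_def field_simps)
    ultimately show "\<bar>jump N \<theta> + \<theta> * a1 * a2 * Pt t a1 a2\<bar> \<le> \<eta>"
      by (simp add: P_def)
  qed
qed

lemma delta_S_approx:
  fixes \<alpha> \<epsilon> :: real
  assumes "coprime a1 a2" "\<rho> \<notin> \<rat>" "0 \<le> \<alpha>" "\<alpha> \<le> 1" "0 < \<epsilon>"
  obtains y where "y \<in> delta_S t a1 a2" "\<bar>y + \<alpha> * a1 * a2 * Pt t a1 a2\<bar> < \<epsilon>"
proof -
  note \<rho> = r0_strict_bounds[OF assms(2)]
  define X where "X = real a1 * a2 * Pt t a1 a2"
  define \<beta> where "\<beta> = (1 - \<rho>) / a1"
  have "\<rho> = 1 - a1 * \<beta>"
    using a1_pos by (simp add: \<beta>_def)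
  then have "\<beta> \<notin> \<rat>"
    using assms(2) by (metis Rats_1 Rats_diff Rats_mult Rats_of_nat)
  have "\<forall>\<^sub>F N in sequentially. a1 / \<rho> \<le> real N"
    using filterlim_real_sequentially unfolding filterlim_at_top by blast
  moreover note eventually_jump_close_to_linear[OF \<rho> half_gt_zero[OF assms(5)]]
  ultimately have "\<forall>\<^sub>F N in sequentially. a1 \<le> N * \<rho> \<and> (\<forall>\<theta>\<in>{0..1}. \<bar>jump N \<theta> + \<theta> * X\<bar> \<le> \<epsilon> / 2)"
    by eventually_elim (use \<rho>(1) in \<open>simp add: pos_divide_le_eq X_def mult.assoc\<close>)
  then obtain M where M: "\<And>N. M \<le> N \<Longrightarrow> a1 \<le> N * \<rho> \<and> (\<forall>\<theta>\<in>{0..1}. \<bar>jump N \<theta> + \<theta> * X\<bar> \<le> \<epsilon> / 2)"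
    unfolding eventually_sequentially by blast
  obtain N where "M \<le> N" "real N * \<beta> \<notin> \<int>"
    and N: "\<bar>ceiling_gap (real N * \<beta>) - \<alpha>\<bar> < \<epsilon> / (2 * (\<bar>X\<bar> + 1))"
    using ceiling_gap_approx[OF \<open>\<beta> \<notin> \<rat>\<close> assms(3,4), of "\<epsilon> / (2 * (\<bar>X\<bar> + 1))"] assms(5) by auto
  define \<theta> where "\<theta> = ceiling_gap (real N * \<beta>)"
  have "\<theta> \<in> {0..1}"
    using \<open>real N * \<beta> \<notin> \<int>\<close> frac_lt_1[of "real N * \<beta>"] by (simp add: \<theta>_def ceiling_gap_not_Ints)
  have "jump N \<theta> \<in> delta_S t a1 a2"
    unfolding \<theta>_def using jump_in_delta_S assms(1) M[OF \<open>M \<le> N\<close>] \<open>real N * \<beta> \<notin> \<int>\<close>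
    by (simp add: \<beta>_def)
  moreover have "\<bar>jump N \<theta> + \<theta> * X\<bar> \<le> \<epsilon> / 2"
    using M[OF \<open>M \<le> N\<close>] \<open>\<theta> \<in> {0..1}\<close> by blast
  moreover have "\<bar>(\<alpha> - \<theta>) * X\<bar> < \<epsilon> / 2"
  proof -
    have "\<bar>(\<alpha> - \<theta>) * X\<bar> \<le> \<epsilon> / (2 * (\<bar>X\<bar> + 1)) * \<bar>X\<bar>"
      unfolding abs_mult using N by (intro mult_right_mono) (simp_all add: \<theta>_def abs_minus_commute)
    also have "\<dots> < \<epsilon> / 2"
      using assms(5) by (simp add: field_simps)
    finally show ?thesis .
  qed
  ultimately show ?thesis
    using that[of "jump N \<theta>"] abs_triangle_ineq[of "jump N \<theta> + \<theta> * X" "(\<alpha> - \<theta>) * X"]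
    by (simp add: X_def algebra_simps)
qed

end

theorem proposition1:
  fixes a1 a2 :: nat and t :: real
  assumes "1 < a1" and "a1 < a2" and "coprime a1 a2"
    and "1 < t"
    and "r0 t a1 a2 \<notin> \<rat>"
  shows "{0 .. \<bar>real a1 * real a2 * Pt t a1 a2\<bar>} \<subseteq> closure (delta_S t a1 a2)"
proof
  interpret tnorm_lengths a1 a2 t
    using assms by unfold_locales auto
  define X where "X = real a1 * a2 * Pt t a1 a2"
  have "X \<le> 0"
    using Pt_nonpos[OF r0_strict_bounds[OF assms(5)]] by (simp add: X_def mult_nonneg_nonpos)
  fix d assume "d \<in> {0 .. \<bar>real a1 * real a2 * Pt t a1 a2\<bar>}"
  then have "0 \<le> d" "d \<le> - X"
    using \<open>X \<le> 0\<close> by (auto simp: X_def)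
  define \<alpha> where "\<alpha> = (if X = 0 then 0 else - d / X)"
  have \<alpha>: "0 \<le> \<alpha>" "\<alpha> \<le> 1" "d = - \<alpha> * X"
    using \<open>0 \<le> d\<close> \<open>d \<le> - X\<close> \<open>X \<le> 0\<close> by (auto simp: \<alpha>_def field_simps)
  show "d \<in> closure (delta_S t a1 a2)"
    unfolding closure_approachable
  proof (intro allI impI)
    fix \<epsilon> :: real assume "0 < \<epsilon>"
    then obtain y where "y \<in> delta_S t a1 a2" "\<bar>y + \<alpha> * X\<bar> < \<epsilon>"
      using delta_S_approx[OF assms(3,5) \<alpha>(1,2)] by (auto simp: X_def mult.assoc)
    then show "\<exists>y\<in>delta_S t a1 a2. dist y d < \<epsilon>"
      using \<alpha>(3) by (auto simp: dist_real_def)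
  qed
qed

end
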